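(* Let $f\in\mathbb{R}[x_1,\dots,x_n]$ be a homogeneous polynomial of degree $3$ that is $\lambda$-bounded for some $\lambda>0$. Then $\max_{\|v\|=1} f(v)\le \lambda$, and moreover every degree-$4$ pseudo-expectation $\tilde{\mathbb{E}}$ on $\mathbb{R}[x]_{\le 4}$ satisfies $$\tilde{\mathbb{E}}\, f(x)\;\le\;\lambda\cdot\big(\tilde{\mathbb{E}}\,\|x\|^4\big)^{3/4}.$$
   Context: A degree-$d$ pseudo-expectation ($d$ even) is a linear functional $\tilde{\mathbb{E}}:\mathbb{R}[x]_{\le d}\to\mathbb{R}$ with $\tilde{\mathbb{E}}\,1=1$ and $\tilde{\mathbb{E}}\,p(x)^2\ge 0$ for every polynomial $p$ of degree at most $d/2$. A matrix $M\in\mathbb{R}^{n^2\times n^2}$ is a matrix representation of the homogeneous quartic $\|x\|^4$ if $\langle x^{\otimes 2}, M x^{\otimes 2}\rangle=\|x\|^4$ as polynomials. A homogeneous cubic $f$ is called $\lambda$-bounded if there exist matrices $A_1,\dots,A_n\in\mathbb{R}^{n\times n}$ with $f(x)=\sum_{i=1}^n x_i\langle x,A_i x\rangle$ and a matrix representation $M$ of $\|x\|^4$ such that $\sum_i A_i\otimes A_i\preceq \lambda^2 M$, i.e. $\langle u,(\lambda^2M-\sum_iA_i\otimes A_i)u\rangle\ge 0$ for all $u\in\mathbb{R}^{n^2}$. *)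

theory Defs
  imports "HOL-Analysis.Analysis"
begin

text \<open>Polynomials in n real variables (n = CARD('n)) are represented by the
functions real^'n => real they define (over the reals the coefficient vector is
determined by the function).\<close>

definition monomial_fun :: "('n::finite \<Rightarrow> nat) \<Rightarrow> real^'n \<Rightarrow> real" where
  "monomial_fun \<alpha> = (\<lambda>x. \<Prod>i\<in>UNIV. (x $ i) ^ (\<alpha> i))"

definition exps_le :: "nat \<Rightarrow> ('n::finite \<Rightarrow> nat) set" where
  "exps_le d = {\<alpha>. (\<Sum>i\<in>UNIV. \<alpha> i) \<le> d}"

definition exps_eq :: "nat \<Rightarrow> ('n::finite \<Rightarrow> nat) set" where
  "exps_eq d = {\<alpha>. (\<Sum>i\<in>UNIV. \<alpha> i) = d}"

definition poly_le :: "nat \<Rightarrow> (real^'n::finite \<Rightarrow> real) \<Rightarrow> bool" where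
  "poly_le d p \<longleftrightarrow> (\<exists>c. p = (\<lambda>x. \<Sum>\<alpha>\<in>exps_le d. c \<alpha> * monomial_fun \<alpha> x))"

definition homog_poly :: "nat \<Rightarrow> (real^'n::finite \<Rightarrow> real) \<Rightarrow> bool" where
  "homog_poly d p \<longleftrightarrow> (\<exists>c. p = (\<lambda>x. \<Sum>\<alpha>\<in>exps_eq d. c \<alpha> * monomial_fun \<alpha> x))"

definition pseudo_expectation :: "nat \<Rightarrow> ((real^'n::finite \<Rightarrow> real) \<Rightarrow> real) \<Rightarrow> bool" where
  "pseudo_expectation d E \<longleftrightarrow>
     even d \<and>
     (\<forall>p q. poly_le d p \<longrightarrow> poly_le d q \<longrightarrow> E (\<lambda>x. p x + q x) = E p + E q) \<and>
     (\<forall>p c. poly_le d p \<longrightarrow> E (\<lambda>x. c * p x) = c * E p) \<and>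
     E (\<lambda>x. 1) = 1 \<and>
     (\<forall>p. poly_le (d div 2) p \<longrightarrow> E (\<lambda>x. (p x)^2) \<ge> 0)"

definition tensor2 :: "real^'n::finite \<Rightarrow> real^('n \<times> 'n)" where
  "tensor2 x = (\<chi> p. x $ fst p * x $ snd p)"

definition kron :: "real^'n^'n \<Rightarrow> real^'n^'n \<Rightarrow> real^('n::finite \<times> 'n)^('n \<times> 'n)" where
  "kron A B = (\<chi> p q. A $ fst p $ fst q * B $ snd p $ snd q)"

definition matrix_rep_norm4 :: "real^('n::finite \<times> 'n)^('n \<times> 'n) \<Rightarrow> bool" where
  "matrix_rep_norm4 M \<longleftrightarrow> (\<forall>x::real^'n. tensor2 x \<bullet> (M *v tensor2 x) = (norm x)^4)"

definition lambda_bounded :: "real \<Rightarrow> (real^'n::finite \<Rightarrow> real) \<Rightarrow> bool" where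
  "lambda_bounded lam f \<longleftrightarrow>
     (\<exists>(A :: 'n \<Rightarrow> real^'n^'n) (M :: real^('n \<times> 'n)^('n \<times> 'n)).
        (\<forall>x. f x = (\<Sum>i\<in>UNIV. x $ i * (x \<bullet> (A i *v x)))) \<and>
        matrix_rep_norm4 M \<and>
        (\<forall>u. u \<bullet> ((lam^2 *\<^sub>R M - (\<Sum>i\<in>UNIV. kron (A i) (A i))) *v u) \<ge> 0))"

end

theory Submission
  imports Defs
begin

text \<open>Write f x = sum_i x_i g_i x with g_i x = <x, A_i x>. On x \<otimes> x the positive semidefinite
matrix lam^2 M - sum_i A_i \<otimes> A_i evaluates to lam^2 |x|^4 - sum_i (g_i x)^2, and a psd quadratic
form is a sum of squares of linear forms; so this quartic is a sum of squares of quadratics and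
E (sum_i g_i^2) <= lam^2 E |x|^4. Expanding 0 <= E (sum_i (t x_i - g_i x)^2) gives
2 t E f <= t^2 E |x|^2 + E (sum_i g_i^2), and pseudo-Cauchy-Schwarz gives
(E |x|^2)^2 <= E |x|^4; the choice t = lam (E |x|^4)^(1/4) yields the bound. The bound on the
sphere is the case of point evaluation, a pseudo-expectation of every even degree.\<close>

lemma finite_exps_le: "finite (exps_le d :: ('n::finite \<Rightarrow> nat) set)"
proof (rule finite_subset)
  show "exps_le d \<subseteq> PiE (UNIV::'n set) (\<lambda>_. {..d})"
  proof
    fix \<alpha> :: "'n \<Rightarrow> nat" assume "\<alpha> \<in> exps_le d"
    then have "\<alpha> j \<le> d" for j
      using member_le_sum[of j UNIV \<alpha>] by (auto simp: exps_le_def)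
    then show "\<alpha> \<in> PiE UNIV (\<lambda>_. {..d})" by auto
  qed
qed (rule finite_PiE, auto)

lemma poly_le_sum_monomials:
  assumes "finite T" "T \<subseteq> exps_le d"
  shows "poly_le d (\<lambda>x::real^'n::finite. \<Sum>\<alpha>\<in>T. c \<alpha> * monomial_fun \<alpha> x)"
proof -
  define c' where "c' \<alpha> = (if \<alpha> \<in> T then c \<alpha> else 0)" for \<alpha>
  have "(\<Sum>\<alpha>\<in>T. c \<alpha> * monomial_fun \<alpha> x) = (\<Sum>\<alpha>\<in>exps_le d. c' \<alpha> * monomial_fun \<alpha> x)"
    for x :: "real^'n"
    by (rule sum.mono_neutral_cong_left) (use assms finite_exps_le in \<open>auto simp: c'_def\<close>)
  then show ?thesis unfolding poly_le_def by blast
qed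

lemma poly_le_monomial:
  assumes "(\<Sum>i\<in>UNIV. \<gamma> i) \<le> d"
  shows "poly_le d (\<lambda>x. a * monomial_fun \<gamma> x)"
  using poly_le_sum_monomials[of "{\<gamma>}" d "\<lambda>_. a"] assms by (simp add: exps_le_def)

lemma poly_le_const: "poly_le d (\<lambda>x::real^'n::finite. a)"
  using poly_le_monomial[of "\<lambda>_::'n. 0" d a] by (simp add: monomial_fun_def)

lemma poly_le_coord:
  assumes "1 \<le> d"
  shows "poly_le d (\<lambda>x::real^'n::finite. x $ i)"
proof -
  have "monomial_fun (\<lambda>j. if j = i then 1 else 0) x = x $ i" for x :: "real^'n"
    by (simp add: monomial_fun_def power_0 if_distrib[of "power _"] prod.If_cases)
  then show ?thesis using poly_le_monomial[of "\<lambda>j. if j = i then 1 else 0" d 1] assms by simp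
qed

lemma poly_le_add:
  assumes "poly_le d p" "poly_le d q"
  shows "poly_le d (\<lambda>x. p x + q x)"
proof -
  obtain c e where "p = (\<lambda>x. \<Sum>\<alpha>\<in>exps_le d. c \<alpha> * monomial_fun \<alpha> x)"
    and "q = (\<lambda>x. \<Sum>\<alpha>\<in>exps_le d. e \<alpha> * monomial_fun \<alpha> x)"
    using assms unfolding poly_le_def by blast
  then have "(\<lambda>x. p x + q x) = (\<lambda>x. \<Sum>\<alpha>\<in>exps_le d. (c \<alpha> + e \<alpha>) * monomial_fun \<alpha> x)"
    by (simp add: sum.distrib distrib_right)
  then show ?thesis unfolding poly_le_def by (intro exI[where x="\<lambda>\<alpha>. c \<alpha> + e \<alpha>"])
qed

lemma poly_le_scale:
  assumes "poly_le d p"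
  shows "poly_le d (\<lambda>x. a * p x)"
proof -
  obtain c where "p = (\<lambda>x. \<Sum>\<alpha>\<in>exps_le d. c \<alpha> * monomial_fun \<alpha> x)"
    using assms unfolding poly_le_def by blast
  then have "(\<lambda>x. a * p x) = (\<lambda>x. \<Sum>\<alpha>\<in>exps_le d. (a * c \<alpha>) * monomial_fun \<alpha> x)"
    by (simp add: sum_distrib_left mult.assoc)
  then show ?thesis unfolding poly_le_def by (intro exI[where x="\<lambda>\<alpha>. a * c \<alpha>"])
qed

lemma poly_le_sum:
  assumes "finite I" "\<And>i. i \<in> I \<Longrightarrow> poly_le d (f i)"
  shows "poly_le d (\<lambda>x. \<Sum>i\<in>I. f i x)"
  using assms by (induction I rule: finite_induct) (auto intro: poly_le_const poly_le_add)

lemma poly_le_diff: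
  assumes "poly_le d p" "poly_le d q"
  shows "poly_le d (\<lambda>x. p x - q x)"
  using poly_le_add[OF assms(1) poly_le_scale[OF assms(2), of "-1"]] by simp

lemma poly_le_mono:
  assumes "poly_le a p" "a \<le> d"
  shows "poly_le d p"
proof -
  obtain c where "p = (\<lambda>x. \<Sum>\<alpha>\<in>exps_le a. c \<alpha> * monomial_fun \<alpha> x)"
    using assms(1) unfolding poly_le_def by blast
  moreover have "exps_le a \<subseteq> exps_le d" using assms(2) by (auto simp: exps_le_def)
  ultimately show ?thesis using poly_le_sum_monomials[OF finite_exps_le, of a d c] by simp
qed

lemma monomial_fun_mult:
  "monomial_fun \<alpha> x * monomial_fun \<beta> x = monomial_fun (\<lambda>i. \<alpha> i + \<beta> i) x"
  by (simp add: monomial_fun_def prod.distrib power_add)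

lemma poly_le_mult:
  fixes p q :: "real^'n::finite \<Rightarrow> real"
  assumes "poly_le a p" "poly_le b q" "a + b \<le> d"
  shows "poly_le d (\<lambda>x. p x * q x)"
proof -
  obtain c e where "p = (\<lambda>x. \<Sum>\<alpha>\<in>exps_le a. c \<alpha> * monomial_fun \<alpha> x)"
    and "q = (\<lambda>x. \<Sum>\<beta>\<in>exps_le b. e \<beta> * monomial_fun \<beta> x)"
    using assms(1,2) unfolding poly_le_def by blast
  then have "(\<lambda>x. p x * q x) = (\<lambda>x. \<Sum>\<alpha>\<in>exps_le a. \<Sum>\<beta>\<in>exps_le b.
      (c \<alpha> * e \<beta>) * monomial_fun (\<lambda>i. \<alpha> i + \<beta> i) x)"
    by (simp add: sum_product monomial_fun_mult[symmetric] mult_ac)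
  moreover have "(\<Sum>i\<in>UNIV. \<alpha> i + \<beta> i) \<le> d" if "\<alpha> \<in> exps_le a" "\<beta> \<in> exps_le b" for \<alpha> \<beta>
    using that assms(3) by (simp add: exps_le_def sum.distrib)
  ultimately show ?thesis
    by (simp only:) (intro poly_le_sum poly_le_monomial finite_exps_le)
qed

lemma poly_le_quadratic_form: "poly_le 2 (\<lambda>x::real^'n::finite. x \<bullet> (B *v x))"
proof -
  have "poly_le 2 (\<lambda>x::real^'n. B $ i $ j * (x $ i * x $ j))" for i j
    by (intro poly_le_scale poly_le_mult[where a=1 and b=1] poly_le_coord) auto
  then have "poly_le 2 (\<lambda>x::real^'n. \<Sum>i\<in>UNIV. \<Sum>j\<in>UNIV. B $ i $ j * (x $ i * x $ j))"
    by (intro poly_le_sum) auto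
  then show ?thesis
    by (simp add: inner_vec_def matrix_vector_mult_def sum_distrib_left mult_ac)
qed

lemma poly_le_norm_sq: "poly_le 2 (\<lambda>x::real^'n::finite. (norm x)^2)"
proof -
  have "poly_le 2 (\<lambda>x::real^'n. \<Sum>i\<in>UNIV. x $ i * x $ i)"
    by (intro poly_le_sum poly_le_mult[where a=1 and b=1] poly_le_coord) auto
  then show ?thesis by (simp add: power2_norm_eq_inner inner_vec_def)
qed

lemma poly_le_norm_pow4: "poly_le 4 (\<lambda>x::real^'n::finite. (norm x)^4)"
  using poly_le_mult[OF poly_le_norm_sq poly_le_norm_sq, of 4] by (simp add: power_even_eq)

lemma poly_le_sum_coord_mult_quadratic_form:
  "poly_le 3 (\<lambda>x::real^'n::finite. \<Sum>i\<in>UNIV. x $ i * (x \<bullet> (A i *v x)))"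
  by (intro poly_le_sum poly_le_mult[where a=1 and b=2] poly_le_coord poly_le_quadratic_form) auto

lemma poly_le_sum_sq_quadratic_forms:
  "finite I \<Longrightarrow> poly_le 4 (\<lambda>x::real^'n::finite. \<Sum>i\<in>I. (x \<bullet> (A i *v x))^2)"
  unfolding power2_eq_square
  by (intro poly_le_sum poly_le_mult[where a=2 and b=2] poly_le_quadratic_form) auto

definition quad_form :: "'k set \<Rightarrow> ('k \<Rightarrow> 'k \<Rightarrow> real) \<Rightarrow> ('k \<Rightarrow> real) \<Rightarrow> real" where
  "quad_form S Q u = (\<Sum>p\<in>S. \<Sum>q\<in>S. u p * Q p q * u q)"

lemma quad_form_insert:
  assumes "finite S" "a \<notin> S"
  shows "quad_form (insert a S) Q u
    = Q a a * (u a)^2 + (\<Sum>q\<in>S. (Q a q + Q q a) * u q) * u a + quad_form S Q u"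
  using assms
  by (simp add: quad_form_def sum.insert sum.distrib sum_distrib_left sum_distrib_right
      algebra_simps power2_eq_square)

text \<open>For c = 0 both divisions are 0 in HOL, and the statements still hold (then l = 0).
This lets the completion of the square below avoid a case split on the diagonal entry.\<close>

lemma nonneg_quadratic_complete_square:
  fixes c l q :: real
  assumes "0 \<le> c" and nonneg: "\<And>t. 0 \<le> c * t^2 + l * t + q"
  shows "0 \<le> q - l^2 / (4*c)"
    and "c * s^2 + l * s + l^2 / (4*c) = (sqrt c * s + l / (2 * sqrt c))^2"
proof -
  show "0 \<le> q - l^2 / (4*c)"
    using nonneg[of "- l / (2*c)"] \<open>0 \<le> c\<close>
    by (cases "c = 0") (simp_all add: power2_eq_square field_simps)
  show "c * s^2 + l * s + l^2 / (4*c) = (sqrt c * s + l / (2 * sqrt c))^2"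
  proof (cases "c = 0")
    case True
    have "l = 0"
    proof (rule ccontr)
      assume "l \<noteq> 0"
      then show False using nonneg[of "- (q + 1) / l"] True by simp
    qed
    with True show ?thesis by simp
  next
    case False
    with \<open>0 \<le> c\<close> show ?thesis
      by (simp add: power2_sum power_mult_distrib power_divide field_simps)
  qed
qed

lemma psd_quad_form_split_square:
  assumes "finite S" "a \<notin> S" and psd: "\<And>u. 0 \<le> quad_form (insert a S) Q u"
  shows "\<exists>Q' w. (\<forall>u. 0 \<le> quad_form S Q' u) \<and>
    (\<forall>u. quad_form (insert a S) Q u = (\<Sum>p\<in>insert a S. w p * u p)^2 + quad_form S Q' u)"
proof -
  define c where "c = Q a a"
  define b where "b q = Q a q + Q q a" for q
  define L where "L u = (\<Sum>q\<in>S. b q * u q)" for u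
  have restrict: "quad_form S Q (u(a := t)) = quad_form S Q u" "L (u(a := t)) = L u" for u t
    using \<open>a \<notin> S\<close> unfolding quad_form_def L_def by (auto intro!: sum.cong)
  have along_a: "quad_form (insert a S) Q (u(a := t)) = c * t^2 + L u * t + quad_form S Q u"
    for u t
    using quad_form_insert[OF assms(1,2)] restrict by (simp add: c_def b_def L_def)
  have "0 \<le> c"
    using psd[of "(\<lambda>_. 0)(a := 1)"] unfolding along_a by (simp add: L_def quad_form_def)
  have nonneg: "0 \<le> c * t^2 + L u * t + quad_form S Q u" for u t
    using psd[of "u(a := t)"] by (simp add: along_a)
  define Q' where "Q' p q = Q p q - b p * b q / (4*c)" for p q
  have Q': "quad_form S Q' u = quad_form S Q u - (L u)^2 / (4*c)" for u
  proof -
    have "(\<Sum>p\<in>S. \<Sum>q\<in>S. u p * (b p * b q / (4*c)) * u q) = (L u)^2 / (4*c)"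
      by (simp add: L_def power2_eq_square sum_product sum_divide_distrib mult_ac)
    then show ?thesis
      by (simp add: quad_form_def Q'_def right_diff_distrib left_diff_distrib sum_subtractf)
  qed
  define w where "w p = (if p = a then sqrt c else b p / (2 * sqrt c))" for p
  have w: "(\<Sum>p\<in>insert a S. w p * u p) = sqrt c * u a + L u / (2 * sqrt c)" for u
  proof -
    have "(\<Sum>p\<in>S. w p * u p) = (\<Sum>p\<in>S. b p * u p / (2 * sqrt c))"
      using \<open>a \<notin> S\<close> by (intro sum.cong) (auto simp: w_def)
    also have "\<dots> = L u / (2 * sqrt c)"
      by (simp only: L_def sum_divide_distrib)
    finally show ?thesis using assms(1,2) by (simp add: w_def)
  qed
  show ?thesis
  proof (intro exI conjI allI)
    show "0 \<le> quad_form S Q' u" for u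
      unfolding Q' using nonneg_quadratic_complete_square(1)[OF \<open>0 \<le> c\<close> nonneg[where u=u]] .
    fix u
    have "quad_form (insert a S) Q u = c * (u a)^2 + L u * u a + quad_form S Q u"
      using along_a[of u "u a"] by simp
    also have "\<dots> = (sqrt c * u a + L u / (2 * sqrt c))^2 + (quad_form S Q u - (L u)^2 / (4*c))"
      using nonneg_quadratic_complete_square(2)[OF \<open>0 \<le> c\<close> nonneg[where u=u], of "u a"] by linarith
    finally show "quad_form (insert a S) Q u = (\<Sum>p\<in>insert a S. w p * u p)^2 + quad_form S Q' u"
      by (simp only: w Q')
  qed
qed

lemma psd_quad_form_sum_of_squares:
  assumes "finite S" "\<And>u. 0 \<le> quad_form S Q u"
  shows "\<exists>ws. \<forall>u. quad_form S Q u = (\<Sum>w\<leftarrow>ws. (\<Sum>p\<in>S. w p * u p)^2)"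
  using assms
proof (induction S arbitrary: Q rule: finite_induct)
  case empty
  show ?case by (intro exI[where x="[]"]) (simp add: quad_form_def)
next
  case (insert a S)
  obtain Q' w where psd': "\<forall>u. 0 \<le> quad_form S Q' u"
    and split: "\<forall>u. quad_form (insert a S) Q u = (\<Sum>p\<in>insert a S. w p * u p)^2 + quad_form S Q' u"
    using psd_quad_form_split_square[OF insert.hyps insert.prems] by blast
  obtain ws where ws: "\<forall>u. quad_form S Q' u = (\<Sum>w\<leftarrow>ws. (\<Sum>p\<in>S. w p * u p)^2)"
    using insert.IH psd' by blast
  have extend: "(\<Sum>p\<in>insert a S. (v(a := 0)) p * u p) = (\<Sum>p\<in>S. v p * u p)" for v u :: "_ \<Rightarrow> real"
  proof -
    have "(\<Sum>p\<in>S. (v(a := 0)) p * u p) = (\<Sum>p\<in>S. v p * u p)"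
      using \<open>a \<notin> S\<close> by (intro sum.cong) auto
    then show ?thesis using insert.hyps by simp
  qed
  show ?case
    by (intro exI[where x="w # map (\<lambda>v. v(a := 0)) ws"])
      (simp add: split ws extend o_def del: fun_upd_apply)
qed

lemma inner_matrix_vector_mult_eq_quad_form:
  "(u::real^'k::finite) \<bullet> (P *v u) = quad_form UNIV (\<lambda>p q. P $ p $ q) (\<lambda>p. u $ p)"
  by (simp add: quad_form_def inner_vec_def matrix_vector_mult_def sum_distrib_left mult_ac)

lemma inner_matrix_vector_mult_sum:
  "(u::real^'k::finite) \<bullet> (P *v u) = (\<Sum>i\<in>UNIV. \<Sum>j\<in>UNIV. u $ i * P $ i $ j * u $ j)"
  by (simp add: inner_vec_def matrix_vector_mult_def sum_distrib_left mult_ac)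

lemma sum_matrix_vector_mult:
  "(\<Sum>i\<in>I. B i) *v (x :: 'a::comm_ring_1^'n::finite) = (\<Sum>i\<in>I. B i *v x)"
  by (induction I rule: infinite_finite_induct) (simp_all add: matrix_vector_mult_add_rdistrib)

lemma tensor2_inner_kron:
  fixes x :: "real^'n::finite"
  shows "tensor2 x \<bullet> (kron A B *v tensor2 x) = (x \<bullet> (A *v x)) * (x \<bullet> (B *v x))"
proof -
  have "tensor2 x \<bullet> (kron A B *v tensor2 x) = (\<Sum>p\<in>UNIV. \<Sum>q\<in>UNIV.
      (x $ fst p * A $ fst p $ fst q * x $ fst q) * (x $ snd p * B $ snd p $ snd q * x $ snd q))"
    unfolding inner_matrix_vector_mult_sum kron_def tensor2_def by (simp add: mult_ac)
  also have "\<dots> = (\<Sum>i1\<in>UNIV. \<Sum>i2\<in>UNIV. \<Sum>j1\<in>UNIV. \<Sum>j2\<in>UNIV.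
      (x $ i1 * A $ i1 $ j1 * x $ j1) * (x $ i2 * B $ i2 $ j2 * x $ j2))"
    by (simp only: UNIV_Times_UNIV[symmetric] sum.cartesian_product' fst_conv snd_conv)
  also have "\<dots> = (x \<bullet> (A *v x)) * (x \<bullet> (B *v x))"
    by (simp add: inner_matrix_vector_mult_sum sum_product)
  finally show ?thesis .
qed

lemma le_powr_three_quarters_if_quadratic_nonneg:
  fixes lam m a b F :: real
  assumes "0 < lam" "a^2 \<le> m" "b \<le> lam^2 * m"
    and nonneg: "\<And>t. 0 \<le> t^2 * a - 2 * t * F + b"
  shows "F \<le> lam * m powr (3/4)"
proof (cases "m = 0")
  case True
  then have "a = 0" "b \<le> 0" using assms(2,3) by auto
  then show ?thesis using nonneg[of 1] True by simp
next
  case False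
  then have "0 < m" using assms(2) by (smt (verit) zero_le_power2)
  define r where "r = m powr (1/4)"
  have "0 < r" using \<open>0 < m\<close> by (simp add: r_def)
  have "r^4 = m" "r^3 = m powr (3/4)"
    using \<open>0 < m\<close> by (simp_all add: r_def powr_power)
  have "a \<le> r^2"
  proof (rule power2_le_imp_le)
    show "a^2 \<le> (r^2)^2" using assms(2) \<open>r^4 = m\<close> by simp
  qed simp
  have "2 * (lam * r) * F \<le> (lam * r)^2 * a + b"
    using nonneg[of "lam * r"] by simp
  also have "\<dots> \<le> (lam * r)^2 * r^2 + lam^2 * r^4"
    using \<open>a \<le> r^2\<close> assms(3) \<open>r^4 = m\<close> by (intro add_mono mult_left_mono) simp_all
  also have "\<dots> = 2 * (lam * r) * (lam * r^3)"
    by (simp add: power2_eq_square power3_eq_cube power4_eq_xxxx algebra_simps)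
  finally have "F \<le> lam * r^3"
    using \<open>0 < lam\<close> \<open>0 < r\<close> by simp
  with \<open>r^3 = m powr (3/4)\<close> show ?thesis by simp
qed

lemma pseudo_expectation_eval: "even d \<Longrightarrow> pseudo_expectation d (\<lambda>p. p v)"
  by (simp add: pseudo_expectation_def)

context
  fixes E :: "(real^'n::finite \<Rightarrow> real) \<Rightarrow> real"
  assumes E: "pseudo_expectation 4 E"
begin

lemma pseudo_exp_add: "poly_le 4 p \<Longrightarrow> poly_le 4 q \<Longrightarrow> E (\<lambda>x. p x + q x) = E p + E q"
  using E unfolding pseudo_expectation_def by blast

lemma pseudo_exp_scale: "poly_le 4 p \<Longrightarrow> E (\<lambda>x. c * p x) = c * E p"
  using E unfolding pseudo_expectation_def by blast

lemma pseudo_exp_diff: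
  assumes "poly_le 4 p" "poly_le 4 q"
  shows "E (\<lambda>x. p x - q x) = E p - E q"
  using pseudo_exp_add[OF assms(1) poly_le_scale[OF assms(2), of "-1"]]
    pseudo_exp_scale[OF assms(2), of "-1"]
  by simp

lemma pseudo_exp_one: "E (\<lambda>x. 1) = 1"
  using E unfolding pseudo_expectation_def by blast

lemma pseudo_exp_square_nonneg: "poly_le 2 p \<Longrightarrow> 0 \<le> E (\<lambda>x. (p x)^2)"
  using E unfolding pseudo_expectation_def by auto

lemma pseudo_exp_sum:
  "finite I \<Longrightarrow> (\<And>i. i \<in> I \<Longrightarrow> poly_le 4 (f i)) \<Longrightarrow> E (\<lambda>x. \<Sum>i\<in>I. f i x) = (\<Sum>i\<in>I. E (f i))"
proof (induction I rule: finite_induct)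
  case empty
  show ?case using pseudo_exp_scale[OF poly_le_const, of 0 1] by simp
next
  case (insert a I)
  then show ?case
    using pseudo_exp_add[of "f a" "\<lambda>x. \<Sum>i\<in>I. f i x"] by (simp add: poly_le_sum)
qed

lemma pseudo_exp_sum_squares_nonneg:
  assumes "finite I" "\<And>i. i \<in> I \<Longrightarrow> poly_le 2 (h i)"
  shows "0 \<le> E (\<lambda>x. \<Sum>i\<in>I. (h i x)^2)"
proof -
  have "E (\<lambda>x. \<Sum>i\<in>I. (h i x)^2) = (\<Sum>i\<in>I. E (\<lambda>x. (h i x)^2))"
    using assms
    by (intro pseudo_exp_sum) (auto simp: power2_eq_square intro: poly_le_mult[where a=2 and b=2])
  also have "\<dots> \<ge> 0" using assms by (intro sum_nonneg pseudo_exp_square_nonneg)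
  finally show ?thesis .
qed

lemma pseudo_exp_cauchy_schwarz:
  assumes "poly_le 2 p"
  shows "(E p)^2 \<le> E (\<lambda>x. (p x)^2)"
proof -
  have p4: "poly_le 4 p"
    using assms by (rule poly_le_mono) simp
  have p_sq: "poly_le 4 (\<lambda>x. (p x)^2)"
    using poly_le_mult[OF assms assms, of 4] by (simp add: power2_eq_square)
  have "0 \<le> E (\<lambda>x. (p x - E p)^2)"
    using assms by (intro pseudo_exp_square_nonneg poly_le_add[of 2 p "\<lambda>_. - E p", simplified]
      poly_le_const)
  also have "(\<lambda>x. (p x - E p)^2) = (\<lambda>x. ((p x)^2 + (-2 * E p) * p x) + (E p)^2 * 1)"
    by (simp add: power2_diff algebra_simps)
  also have "E \<dots> = E (\<lambda>x. (p x)^2) + (-2 * E p) * E p + (E p)^2 * E (\<lambda>x. 1)"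
    by (simp only: pseudo_exp_add pseudo_exp_scale p4 p_sq poly_le_add poly_le_scale poly_le_const)
  also have "\<dots> = E (\<lambda>x. (p x)^2) - (E p)^2"
    by (simp add: pseudo_exp_one power2_eq_square)
  finally show ?thesis by simp
qed

lemma pseudo_exp_psd_tensor2:
  assumes "\<And>u. 0 \<le> u \<bullet> (P *v u)"
  shows "0 \<le> E (\<lambda>x. tensor2 x \<bullet> (P *v tensor2 x))"
proof -
  obtain ws where ws: "\<forall>u. quad_form UNIV (\<lambda>p q. P $ p $ q) u = (\<Sum>w\<leftarrow>ws. (\<Sum>p\<in>UNIV. w p * u p)^2)"
    using psd_quad_form_sum_of_squares[of UNIV "\<lambda>p q. P $ p $ q"] assms[of "vec_lambda _"]
    by (auto simp: inner_matrix_vector_mult_eq_quad_form)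
  define h where "h k x = (\<Sum>p\<in>UNIV. (ws ! k) p * tensor2 x $ p)" for k and x :: "real^'n"
  have "poly_le 2 (h k)" for k
    unfolding h_def tensor2_def vec_lambda_beta
    by (intro poly_le_sum poly_le_scale poly_le_mult[where a=1 and b=1] poly_le_coord) auto
  then have "0 \<le> E (\<lambda>x. \<Sum>k\<in>{..<length ws}. (h k x)^2)"
    by (intro pseudo_exp_sum_squares_nonneg) auto
  also have "(\<lambda>x. \<Sum>k\<in>{..<length ws}. (h k x)^2) = (\<lambda>x. tensor2 x \<bullet> (P *v tensor2 x))"
    by (simp add: inner_matrix_vector_mult_eq_quad_form ws h_def sum_list_sum_nth atLeast0LessThan)
  finally show ?thesis .
qed

lemma pseudo_exp_sum_sq_quadratic_forms_le:
  fixes A :: "'n \<Rightarrow> real^'n^'n"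
  assumes M: "matrix_rep_norm4 M"
    and psd: "\<And>u. 0 \<le> u \<bullet> ((lam^2 *\<^sub>R M - (\<Sum>i\<in>UNIV. kron (A i) (A i))) *v u)"
  shows "E (\<lambda>x. \<Sum>i\<in>UNIV. (x \<bullet> (A i *v x))^2) \<le> lam^2 * E (\<lambda>x. (norm x)^4)"
proof -
  have "0 \<le> E (\<lambda>x. tensor2 x \<bullet> ((lam^2 *\<^sub>R M - (\<Sum>i\<in>UNIV. kron (A i) (A i))) *v tensor2 x))"
    using psd by (rule pseudo_exp_psd_tensor2)
  also have "(\<lambda>x. tensor2 x \<bullet> ((lam^2 *\<^sub>R M - (\<Sum>i\<in>UNIV. kron (A i) (A i))) *v tensor2 x))
    = (\<lambda>x. lam^2 * (norm x)^4 - (\<Sum>i\<in>UNIV. (x \<bullet> (A i *v x))^2))"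
    using M
    by (simp add: matrix_vector_mult_diff_rdistrib scaleR_matrix_vector_assoc[symmetric]
        sum_matrix_vector_mult inner_diff_right inner_sum_right tensor2_inner_kron
        matrix_rep_norm4_def power2_eq_square)
  also have "E \<dots> = lam^2 * E (\<lambda>x. (norm x)^4) - E (\<lambda>x. \<Sum>i\<in>UNIV. (x \<bullet> (A i *v x))^2)"
  proof -
    have "poly_le 4 (\<lambda>x::real^'n. lam^2 * (norm x)^4)"
      by (intro poly_le_scale poly_le_norm_pow4)
    moreover have "poly_le 4 (\<lambda>x::real^'n. \<Sum>i\<in>UNIV. (x \<bullet> (A i *v x))^2)"
      by (intro poly_le_sum_sq_quadratic_forms) simp
    ultimately show ?thesis
      using pseudo_exp_diff pseudo_exp_scale[OF poly_le_norm_pow4] by simp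
  qed
  finally show ?thesis by simp
qed

lemma pseudo_exp_le_if_lambda_bounded:
  assumes "0 < lam" "lambda_bounded lam f"
  shows "E f \<le> lam * E (\<lambda>x. (norm x)^4) powr (3/4)"
proof -
  obtain A :: "'n \<Rightarrow> real^'n^'n" and M where f: "\<forall>x. f x = (\<Sum>i\<in>UNIV. x $ i * (x \<bullet> (A i *v x)))"
    and M: "matrix_rep_norm4 M"
    and psd: "\<forall>u. 0 \<le> u \<bullet> ((lam^2 *\<^sub>R M - (\<Sum>i\<in>UNIV. kron (A i) (A i))) *v u)"
    using assms(2) unfolding lambda_bounded_def by blast
  define g where "g i x = x \<bullet> (A i *v x)" for i and x :: "real^'n"
  define G where "G x = (\<Sum>i\<in>UNIV. (g i x)^2)" for x :: "real^'n"
  have f_eq: "f = (\<lambda>x. \<Sum>i\<in>UNIV. x $ i * g i x)"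
    using f by (auto simp: g_def)
  have pn: "poly_le 4 (\<lambda>x::real^'n. (norm x)^2)"
    using poly_le_norm_sq by (rule poly_le_mono) simp
  have pf: "poly_le 4 f"
    unfolding f_eq g_def using poly_le_sum_coord_mult_quadratic_form by (rule poly_le_mono) simp
  have pG: "poly_le 4 G"
    unfolding G_def g_def by (intro poly_le_sum_sq_quadratic_forms) simp
  have "(E (\<lambda>x. (norm x)^2))^2 \<le> E (\<lambda>x. (norm x)^4)"
    using pseudo_exp_cauchy_schwarz[OF poly_le_norm_sq] by simp
  moreover have "E G \<le> lam^2 * E (\<lambda>x. (norm x)^4)"
    unfolding G_def g_def using M psd by (intro pseudo_exp_sum_sq_quadratic_forms_le) auto
  moreover have "0 \<le> t^2 * E (\<lambda>x. (norm x)^2) - 2 * t * E f + E G" for t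
  proof -
    have "0 \<le> E (\<lambda>x. \<Sum>i\<in>UNIV. (t * x $ i - g i x)^2)"
      unfolding g_def
      by (intro pseudo_exp_sum_squares_nonneg poly_le_diff poly_le_scale poly_le_coord
          poly_le_quadratic_form) simp_all
    also have "(\<lambda>x. \<Sum>i\<in>UNIV. (t * x $ i - g i x)^2) = (\<lambda>x. t^2 * (norm x)^2 - 2 * t * f x + G x)"
      unfolding power2_norm_eq_inner inner_vec_def f_eq G_def
      by (simp add: power2_diff sum.distrib sum_subtractf sum_distrib_left power2_eq_square
          algebra_simps)
    also have "E \<dots> = t^2 * E (\<lambda>x. (norm x)^2) - 2 * t * E f + E G"
      using pseudo_exp_add[OF poly_le_diff[OF poly_le_scale[OF pn] poly_le_scale[OF pf]] pG]
        pseudo_exp_diff[OF poly_le_scale[OF pn] poly_le_scale[OF pf]]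
        pseudo_exp_scale[OF pn] pseudo_exp_scale[OF pf]
      by simp
    finally show ?thesis .
  qed
  ultimately show ?thesis
    by (rule le_powr_three_quarters_if_quadratic_nonneg[OF assms(1)])
qed

end

theorem mainTheorem1:
  fixes f :: "real^'n::finite \<Rightarrow> real" and lam :: real
  assumes "homog_poly 3 f"
    and "lam > 0"
    and "lambda_bounded lam f"
  shows "(\<forall>v. norm v = 1 \<longrightarrow> f v \<le> lam) \<and>
         (\<forall>E. pseudo_expectation 4 E \<longrightarrow>
               E f \<le> lam * (E (\<lambda>x. (norm x)^4)) powr (3/4))"
proof -
  have bound: "E f \<le> lam * E (\<lambda>x. (norm x)^4) powr (3/4)" if "pseudo_expectation 4 E" for E
    using pseudo_exp_le_if_lambda_bounded[OF that assms(2,3)] .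
  have "f v \<le> lam" if "norm v = 1" for v
    using bound[OF pseudo_expectation_eval[of 4 v]] that by simp
  with bound show ?thesis by blast
qed

end
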